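(* Suppose $\mathbb{Q}_1$ is a probability measure on $(\Omega,\mathcal F(T))$ such that each $S_{1,j}$, $j=1,\dots,d$, is a real-valued (in particular finite) nonnegative $\mathbb{Q}_1$-martingale (possibly hitting $0$). Define probability measures $\mathbb{Q}_i$ by $\frac{\mathrm d\mathbb{Q}_i}{\mathrm d\mathbb{Q}_1}=S_{i,1}(0)S_{1,i}(T)$, $i=1,\dots,d$. Then $(\mathbb{Q}_i)_i$ is a numéraire-consistent family, each $\mathbb{Q}_i$ is absolutely continuous with respect to $\mathbb{Q}_1$, and $\sum_i\mathbb{Q}_i\sim\mathbb{Q}_1$. Moreover, if $\overline{\mathbb{Q}}$ denotes the corresponding valuation measure with respect to the basket (i.e. $\overline{\mathbb Q}=\sum_i\overline S_i(0)\mathbb Q_i$), then for all $r\in[0,T]$ and $C\in\mathcal C$ with $\overline C\in L^1(\overline{\mathbb Q})$ one has $\mathbb{E}^{\overline{\mathbb{Q}}}_r[\overline C]=\overline S_1(r)\mathbb E^{\mathbb Q_1}_r[C_1]$, and for each $i$, on the event $\{i\in\mathfrak A(r)\}$, $$\frac{\mathbb{E}^{\overline{\mathbb{Q}}}_r[\overline C]}{\overline S_i(r)}=\mathbb{E}^{\mathbb{Q}_i}_r[C_i]+S_{i,1}(r)\,\mathbb{E}^{\mathbb{Q}_1}_r\big[C_1\mathbf 1_{\{S_{1,i}(T)=0\}}\big].$$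
   Context: Fix $T>0$, $d\in\mathbb N$, and a filtered space $(\Omega,\mathcal{F}(T),(\mathcal{F}(t))_{t\in[0,T]})$ with right-continuous filtration and trivial $\mathcal{F}(0)$. For $x,y\in[0,\infty]$ the product $xy$ is defined except when one is $0$ and the other is $\infty$. An exchange matrix is $s=(s_{i,j})\in[0,\infty]^{d\times d}$ with $s_{i,i}=1$ and $s_{i,j}s_{j,k}=s_{i,k}$ for all $i,j,k$ whenever the product is defined. $S=(S_{i,j})_{i,j=1}^d$ is a right-continuous adapted $[0,\infty]^{d\times d}$-valued process such that $S(t)$ is an exchange matrix for every $t$. Active currencies: $\mathfrak{A}(t)=\{i:\sum_jS_{i,j}(t)<\infty\}$, with $\mathfrak A(0)=\{1,\dots,d\}$. Basket prices: $\overline S_i=1/\sum_jS_{i,j}$. A value vector for an exchange matrix $s$ is $v\in[0,\infty]^d$ with $s_{i,j}v_j=v_i$ whenever defined; $\mathcal{C}$ is the set of $\mathcal{F}(T)$-measurable value vectors for $S(T)$, and for $C\in\mathcal C$, $\overline C=\frac{1}{|\mathfrak{A}(T)|}\sum_{j\in\mathfrak{A}(T)}\overline S_j(T)C_j$. A family $(\mathbb{Q}_i)_{i=1}^d$ of probability measures is numéraire-consistent if $\mathbb{E}^{\mathbb{Q}_i}[S_{i,j}(t)\mathbf{1}_A]=S_{i,j}(0)\,\mathbb{Q}_j(A\cap\{S_{j,i}(t)>0\})$ for all $i,j$, $t\in[0,T]$, $A\in\mathcal{F}(t)$. A valuation measure with respect to the basket is a probability measure under which $\overline S$ is a martingale.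 $\mathbb{E}^{\mathbb Q}_r$ is conditional expectation given $\mathcal F(r)$. *)

theory Defs
  imports "HOL-Probability.Probability"
begin

definition filtered_space :: "'a set \<Rightarrow> (real \<Rightarrow> 'a measure) \<Rightarrow> real \<Rightarrow> bool" where
  "filtered_space \<Omega> F T \<longleftrightarrow>
     0 < T \<and>
     (\<forall>t\<in>{0..T}. space (F t) = \<Omega>) \<and>
     (\<forall>s t. 0 \<le> s \<and> s \<le> t \<and> t \<le> T \<longrightarrow> sets (F s) \<subseteq> sets (F t)) \<and>
     (\<forall>t\<in>{0..<T}. sets (F t) = (\<Inter>u\<in>{t<..T}. sets (F u))) \<and>
     sets (F 0) = {{}, \<Omega>}"

definition martingale :: "'a measure \<Rightarrow> (real \<Rightarrow> 'a measure) \<Rightarrow> real \<Rightarrow> (real \<Rightarrow> 'a \<Rightarrow> real) \<Rightarrow> bool" where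
  "martingale M F T X \<longleftrightarrow>
     (\<forall>t\<in>{0..T}. X t \<in> borel_measurable (F t) \<and> integrable M (X t)) \<and>
     (\<forall>s t. 0 \<le> s \<and> s \<le> t \<and> t \<le> T \<longrightarrow>
        (AE \<omega> in M. real_cond_exp M (F s) (X t) \<omega> = X s \<omega>))"

definition prod_defined :: "ennreal \<Rightarrow> ennreal \<Rightarrow> bool" where
  "prod_defined x y \<longleftrightarrow> \<not> (x = 0 \<and> y = \<infinity>) \<and> \<not> (x = \<infinity> \<and> y = 0)"

text \<open>Currencies are indexed by 1..d.\<close>

definition exchange_matrix :: "nat \<Rightarrow> (nat \<Rightarrow> nat \<Rightarrow> ennreal) \<Rightarrow> bool" where
  "exchange_matrix d s \<longleftrightarrow>
     (\<forall>i\<in>{1..d}. s i i = 1) \<and>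
     (\<forall>i\<in>{1..d}. \<forall>j\<in>{1..d}. \<forall>k\<in>{1..d}.
        prod_defined (s i j) (s j k) \<longrightarrow> s i j * s j k = s i k)"

definition value_vector :: "nat \<Rightarrow> (nat \<Rightarrow> nat \<Rightarrow> ennreal) \<Rightarrow> (nat \<Rightarrow> ennreal) \<Rightarrow> bool" where
  "value_vector d s v \<longleftrightarrow>
     (\<forall>i\<in>{1..d}. \<forall>j\<in>{1..d}. prod_defined (s i j) (v j) \<longrightarrow> s i j * v j = v i)"

text \<open>The process S : time, omega, i, j.\<close>

definition active :: "nat \<Rightarrow> (real \<Rightarrow> 'a \<Rightarrow> nat \<Rightarrow> nat \<Rightarrow> ennreal) \<Rightarrow> real \<Rightarrow> 'a \<Rightarrow> nat set" where
  "active d S t \<omega> = {i\<in>{1..d}. (\<Sum>j\<in>{1..d}. S t \<omega> i j) < \<infinity>}"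

definition basket :: "nat \<Rightarrow> (real \<Rightarrow> 'a \<Rightarrow> nat \<Rightarrow> nat \<Rightarrow> ennreal) \<Rightarrow> real \<Rightarrow> 'a \<Rightarrow> nat \<Rightarrow> ennreal" where
  "basket d S t \<omega> i = 1 / (\<Sum>j\<in>{1..d}. S t \<omega> i j)"

text \<open>S(0) is deterministic (F(0) is trivial); its value is read off at an arbitrary point.\<close>

definition initial :: "'a set \<Rightarrow> (real \<Rightarrow> 'a \<Rightarrow> nat \<Rightarrow> nat \<Rightarrow> ennreal) \<Rightarrow> nat \<Rightarrow> nat \<Rightarrow> ennreal" where
  "initial \<Omega> S i j = S 0 (SOME \<omega>. \<omega> \<in> \<Omega>) i j"

definition exchange_process ::
  "nat \<Rightarrow> 'a set \<Rightarrow> (real \<Rightarrow> 'a measure) \<Rightarrow> real \<Rightarrow> (real \<Rightarrow> 'a \<Rightarrow> nat \<Rightarrow> nat \<Rightarrow> ennreal) \<Rightarrow> bool" where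
  "exchange_process d \<Omega> F T S \<longleftrightarrow>
     (\<forall>i\<in>{1..d}. \<forall>j\<in>{1..d}.
        (\<forall>t\<in>{0..T}. (\<lambda>\<omega>. S t \<omega> i j) \<in> borel_measurable (F t)) \<and>
        (\<forall>\<omega>\<in>\<Omega>. \<forall>t\<in>{0..<T}. continuous (at t within {t..T}) (\<lambda>s. S s \<omega> i j))) \<and>
     (\<forall>t\<in>{0..T}. \<forall>\<omega>\<in>\<Omega>. exchange_matrix d (S t \<omega>)) \<and>
     (\<forall>\<omega>\<in>\<Omega>. active d S 0 \<omega> = {1..d})"

definition claims ::
  "nat \<Rightarrow> 'a set \<Rightarrow> (real \<Rightarrow> 'a measure) \<Rightarrow> real \<Rightarrow> (real \<Rightarrow> 'a \<Rightarrow> nat \<Rightarrow> nat \<Rightarrow> ennreal)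
     \<Rightarrow> ('a \<Rightarrow> nat \<Rightarrow> ennreal) set" where
  "claims d \<Omega> F T S = {C. (\<forall>i\<in>{1..d}. (\<lambda>\<omega>. C \<omega> i) \<in> borel_measurable (F T)) \<and>
                          (\<forall>\<omega>\<in>\<Omega>. value_vector d (S T \<omega>) (C \<omega>))}"

definition basket_claim ::
  "nat \<Rightarrow> real \<Rightarrow> (real \<Rightarrow> 'a \<Rightarrow> nat \<Rightarrow> nat \<Rightarrow> ennreal) \<Rightarrow> ('a \<Rightarrow> nat \<Rightarrow> ennreal) \<Rightarrow> 'a \<Rightarrow> ennreal" where
  "basket_claim d T S C \<omega> =
     (1 / of_nat (card (active d S T \<omega>))) *
     (\<Sum>j\<in>active d S T \<omega>. basket d S T \<omega> j * C \<omega> j)"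

definition numeraire_consistent ::
  "nat \<Rightarrow> 'a set \<Rightarrow> (real \<Rightarrow> 'a measure) \<Rightarrow> real \<Rightarrow> (real \<Rightarrow> 'a \<Rightarrow> nat \<Rightarrow> nat \<Rightarrow> ennreal)
     \<Rightarrow> (nat \<Rightarrow> 'a measure) \<Rightarrow> bool" where
  "numeraire_consistent d \<Omega> F T S Q \<longleftrightarrow>
     (\<forall>i\<in>{1..d}. \<forall>j\<in>{1..d}. \<forall>t\<in>{0..T}. \<forall>A\<in>sets (F t).
        (\<integral>\<^sup>+\<omega>. S t \<omega> i j * indicator A \<omega> \<partial>Q i)
          = initial \<Omega> S i j * emeasure (Q j) (A \<inter> {\<omega>\<in>\<Omega>. 0 < S t \<omega> j i}))"

definition weighted_sum_measure ::
  "'a set \<Rightarrow> 'a set set \<Rightarrow> nat set \<Rightarrow> (nat \<Rightarrow> ennreal) \<Rightarrow> (nat \<Rightarrow> 'a measure) \<Rightarrow> 'a measure" where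
  "weighted_sum_measure \<Omega> \<Sigma> I w Q = measure_of \<Omega> \<Sigma> (\<lambda>A. \<Sum>i\<in>I. w i * emeasure (Q i) A)"

definition equivalent_measures :: "'a measure \<Rightarrow> 'a measure \<Rightarrow> bool" where
  "equivalent_measures M N \<longleftrightarrow> absolutely_continuous M N \<and> absolutely_continuous N M"

end

theory Submission
  imports Defs
begin

text \<open>Since every S_{1,i} is a Q_1-martingale, the density S_{i,1}(0) S_{1,i}(T) of Q_i restricted
  to F(t) is S_{i,1}(0) S_{1,i}(t); with the exchange-matrix identity
  S_{i,j} S_{1,i} = 1{S_{j,i} > 0} S_{1,j} this gives numeraire consistency. The density of Q_1 is 1,
  so the sum of all densities is at least 1, and weighting them with the initial basket prices gives
  Qbar the density Sbar_1(0) sum_k S_{1,k}(T). Both conditional expectation formulas follow from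
  Bayes' formula E^{Z P}[X | G] E^P[Z | G] = E^P[Z X | G]: for Qbar the density times the basket claim
  is Sbar_1(0) C_1, for Q_i the density times C_i is S_{i,1}(0) C_1 1{S_{1,i}(T) > 0}, and on active
  currencies Sbar_1 = S_{i,1} Sbar_i.\<close>

lemma ennreal_mult_right_cancel:
  fixes a b c :: ennreal
  assumes "a * c = b * c" "c \<noteq> 0" "c \<noteq> \<infinity>"
  shows "a = b"
proof -
  have "c \<noteq> top" using assms(3) by simp
  then show ?thesis using ennreal_mult_divide_eq[OF assms(2)] assms(1) by metis
qed

lemma ennreal_mult_cancel_inverse:
  fixes y b s s' n :: ennreal
  assumes "y * (b * s) = b * n" "b \<noteq> 0" "b \<noteq> \<infinity>" "s' * s = 1"
  shows "y = s' * n"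
proof -
  have "(y * s) * b = n * b" using assms(1) by (simp add: mult_ac)
  then have "y * s = n" using ennreal_mult_right_cancel assms(2,3) by blast
  then have "y * (s * s') = n * s'" by (simp add: mult.assoc[symmetric])
  then show ?thesis using assms(4) by (simp add: mult.commute)
qed

lemma exchange_matrix_diag: "exchange_matrix d m \<Longrightarrow> i \<in> {1..d} \<Longrightarrow> m i i = 1"
  by (simp add: exchange_matrix_def)

lemma exchange_matrix_prod:
  "exchange_matrix d m \<Longrightarrow> i \<in> {1..d} \<Longrightarrow> j \<in> {1..d} \<Longrightarrow> k \<in> {1..d} \<Longrightarrow>
    prod_defined (m i j) (m j k) \<Longrightarrow> m i j * m j k = m i k"
  by (simp add: exchange_matrix_def)

lemma exchange_matrix_mult:
  assumes "exchange_matrix d m" "i \<in> {1..d}" "j \<in> {1..d}" "k \<in> {1..d}"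
    and "m i j \<noteq> 0" "m i j \<noteq> \<infinity>"
  shows "m i j * m j k = m i k"
  using exchange_matrix_prod[OF assms(1-4)] assms(5,6) by (simp add: prod_defined_def)

lemma exchange_matrix_mult_swap:
  assumes "exchange_matrix d m" "i \<in> {1..d}" "j \<in> {1..d}" "m i j \<noteq> 0" "m i j \<noteq> \<infinity>"
  shows "m i j * m j i = 1"
  using exchange_matrix_mult[OF assms(1-3,2,4,5)] exchange_matrix_diag[OF assms(1,2)] by simp

lemma exchange_matrix_nonzero:
  assumes m: "exchange_matrix d m" and ij: "i \<in> {1..d}" "j \<in> {1..d}"
    and fin: "m i j \<noteq> \<infinity>" "m j i \<noteq> \<infinity>"
  shows "m i j \<noteq> 0"
proof
  assume "m i j = 0"
  then have "prod_defined (m i j) (m j i)" using fin unfolding prod_defined_def by simp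
  then have "m i j * m j i = m i i" by (rule exchange_matrix_prod[OF m ij ij(1)])
  then show False using \<open>m i j = 0\<close> exchange_matrix_diag[OF m ij(1)] by simp
qed

lemma exchange_matrix_row_sum:
  assumes "exchange_matrix d m" "k \<in> {1..d}" "i \<in> {1..d}" "m k i \<noteq> 0" "m k i \<noteq> \<infinity>"
  shows "(\<Sum>l\<in>{1..d}. m k l) = m k i * (\<Sum>l\<in>{1..d}. m i l)"
  by (simp add: sum_distrib_left exchange_matrix_mult[OF assms(1-3) _ assms(4,5)])

lemma exchange_matrix_swap_nonzero_finite:
  assumes "exchange_matrix d m" "k \<in> {1..d}" "j \<in> {1..d}" "m k j \<noteq> 0" "m k j \<noteq> \<infinity>"
  shows "m j k \<noteq> 0" "m j k \<noteq> \<infinity>"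
  using exchange_matrix_mult_swap[OF assms] assms(4) by (auto simp: ennreal_mult_eq_top_iff)

lemma exchange_matrix_mult_indicator:
  assumes m: "exchange_matrix d m" and ijk: "i \<in> {1..d}" "j \<in> {1..d}" "k \<in> {1..d}"
    and fin: "m k i \<noteq> \<infinity>" "m k j \<noteq> \<infinity>"
  shows "m i j * m k i = (if 0 < m j i then m k j else 0)"
proof (cases "m k j = 0")
  case True
  have "m i j * m k i = 0"
    using exchange_matrix_mult[OF m ijk(3,1,2) _ fin(1)] True by (cases "m k i = 0") (auto simp: mult.commute)
  then show ?thesis using True by simp
next
  case False
  note jk = exchange_matrix_swap_nonzero_finite[OF m ijk(3,2) False fin(2)]
  have ji: "m j i = m j k * m k i" using exchange_matrix_mult[OF m ijk(2,3,1) jk] by simp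
  show ?thesis
  proof (cases "m k i = 0")
    case False
    then have "m k i * m i j = m k j" using exchange_matrix_mult[OF m ijk(3,1,2) _ fin(1)] by blast
    then show ?thesis using ji jk False by (simp add: mult.commute zero_less_iff_neq_zero)
  qed (simp add: ji)
qed

lemma inverse_row_sum_nonzero_finite:
  assumes "exchange_matrix d m" "i \<in> {1..d}" "(\<Sum>l\<in>{1..d}. m i l) \<noteq> \<infinity>"
  shows "1 / (\<Sum>l\<in>{1..d}. m i l) \<noteq> 0" "1 / (\<Sum>l\<in>{1..d}. m i l) \<noteq> \<infinity>"
proof -
  have "m i i \<le> (\<Sum>l\<in>{1..d}. m i l)" using assms(2) by (intro member_le_sum) auto
  then have "(\<Sum>l\<in>{1..d}. m i l) \<noteq> 0" using exchange_matrix_diag[OF assms(1,2)]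
    by (metis not_one_le_zero)
  then show "1 / (\<Sum>l\<in>{1..d}. m i l) \<noteq> \<infinity>" by (simp add: ennreal_divide_eq_top_iff)
qed (use assms(3) in simp)

lemma exchange_matrix_inverse_row_sum:
  assumes m: "exchange_matrix d m" and ik: "i \<in> {1..d}" "k \<in> {1..d}"
    and act: "(\<Sum>l\<in>{1..d}. m i l) \<noteq> \<infinity>" and fin: "m k i \<noteq> \<infinity>"
  shows "1 / (\<Sum>l\<in>{1..d}. m k l) = m i k * (1 / (\<Sum>l\<in>{1..d}. m i l))"
proof -
  have ik_fin: "m i k \<noteq> \<infinity>" using act ik(2) by simp
  have ki: "m k i \<noteq> 0" by (rule exchange_matrix_nonzero[OF m ik(2,1) fin ik_fin])
  have "(1 / (\<Sum>l\<in>{1..d}. m k l)) = (m i k * m k i) / ((\<Sum>l\<in>{1..d}. m i l) * m k i)"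
    using exchange_matrix_row_sum[OF m ik(2,1) ki fin]
      exchange_matrix_mult_swap[OF m ik(2,1) ki fin] by (simp add: mult.commute)
  also have "\<dots> = m i k / (\<Sum>l\<in>{1..d}. m i l)" by (rule divide_mult_eq[OF ki fin])
  finally show ?thesis by (simp add: ennreal_times_divide)
qed

lemma value_vector_mult:
  assumes "value_vector d m v" "i \<in> {1..d}" "k \<in> {1..d}" "m k i \<noteq> \<infinity>"
  shows "v i * m k i = (if m k i = 0 then 0 else v k)"
  using assms unfolding value_vector_def prod_defined_def by (auto simp: mult.commute)

lemma value_vector_divide_row_sum:
  assumes m: "exchange_matrix d m" and v: "value_vector d m v" and jk: "j \<in> {1..d}" "k \<in> {1..d}"
    and act: "(\<Sum>l\<in>{1..d}. m j l) \<noteq> \<infinity>" and fin: "m k j \<noteq> \<infinity>"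
  shows "v j / (\<Sum>l\<in>{1..d}. m j l) = v k / (\<Sum>l\<in>{1..d}. m k l)"
proof -
  have kj: "m k j \<noteq> 0" using exchange_matrix_nonzero[OF m jk(2,1) fin] act jk(2) by simp
  have "v k / (\<Sum>l\<in>{1..d}. m k l) = (v j * m k j) / ((\<Sum>l\<in>{1..d}. m j l) * m k j)"
    using value_vector_mult[OF v jk fin] kj exchange_matrix_row_sum[OF m jk(2,1) kj fin]
    by (simp add: mult.commute)
  then show ?thesis using divide_mult_eq[OF kj fin] by simp
qed

lemma active_iff: "i \<in> active d S t \<omega> \<longleftrightarrow> i \<in> {1..d} \<and> (\<Sum>k\<in>{1..d}. S t \<omega> i k) \<noteq> \<infinity>"
  unfolding active_def by (simp add: top.not_eq_extremum del: ennreal_sum_less_top ennreal_sum_eq_top)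

lemma basket_claim_eq_basket:
  assumes m: "exchange_matrix d (S T \<omega>)" and v: "value_vector d (S T \<omega>) (C \<omega>)"
    and k: "k \<in> {1..d}" and fin: "\<forall>j\<in>{1..d}. S T \<omega> k j \<noteq> \<infinity>"
  shows "basket_claim d T S C \<omega> = basket d S T \<omega> k * C \<omega> k"
proof -
  define A where "A = active d S T \<omega>"
  define x where "x = basket d S T \<omega> k * C \<omega> k"
  have "finite A" unfolding A_def active_def by simp
  moreover have "k \<in> A" using k fin unfolding A_def active_iff by simp
  ultimately have card: "of_nat (card A) \<noteq> (0::ennreal)" "of_nat (card A) \<noteq> (top::ennreal)"
    by (auto simp: card_gt_0_iff)
  have "basket d S T \<omega> j * C \<omega> j = x" if "j \<in> A" for j
    using value_vector_divide_row_sum[OF m v _ k, of j] that fin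
    unfolding A_def active_def x_def basket_def by (simp add: ennreal_divide_times top.not_eq_extremum)
  then have "basket_claim d T S C \<omega> = (x * of_nat (card A)) / of_nat (card A)"
    unfolding basket_claim_def A_def[symmetric] by (simp add: ennreal_times_divide mult.commute)
  also have "\<dots> = x" by (rule ennreal_mult_divide_eq[OF card])
  finally show ?thesis unfolding x_def .
qed

lemma sigma_finite_subalgebra_prob_space:
  "prob_space M \<Longrightarrow> subalgebra M F \<Longrightarrow> sigma_finite_subalgebra M F"
  by (intro finite_measure_subalgebra_is_sigma_finite)
    (simp add: finite_measure_subalgebra_def finite_measure_subalgebra_axioms_def prob_space.axioms(1))

context sigma_finite_subalgebra
begin

text \<open>Bayes' formula for conditional expectations under \<open>density M Z\<close>; the hypothesis \<open>tower\<close>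
  says that \<open>Z'\<close> is a version of \<open>E[Z | F]\<close>. Stated multiplicatively, it needs no positivity
  of \<open>Z'\<close>.\<close>

lemma nn_cond_exp_density_mult:
  assumes dens: "sigma_finite_subalgebra (density M Z) F"
    and [measurable]: "Z \<in> borel_measurable M" "Z' \<in> borel_measurable F" "X \<in> borel_measurable M"
    and tower: "\<And>Y. Y \<in> borel_measurable F \<Longrightarrow> (\<integral>\<^sup>+x. Y x * Z x \<partial>M) = (\<integral>\<^sup>+x. Y x * Z' x \<partial>M)"
  shows "AE x in M. nn_cond_exp (density M Z) F X x * Z' x = nn_cond_exp M F (\<lambda>x. Z x * X x) x"
proof (rule nn_cond_exp_charact)
  interpret Q: sigma_finite_subalgebra "density M Z" F by (rule dens)
  let ?Y = "nn_cond_exp (density M Z) F X"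
  have XQ: "X \<in> borel_measurable (density M Z)" by simp
  fix A assume A: "A \<in> sets F"
  have [measurable]: "A \<in> sets F" "A \<in> sets M" using A subalg by (auto simp: subalgebra_def)
  have "(\<integral>\<^sup>+x\<in>A. Z x * X x \<partial>M) = (\<integral>\<^sup>+x. Z x * (indicator A x * X x) \<partial>M)"
    by (simp add: mult_ac)
  also have "\<dots> = (\<integral>\<^sup>+x. indicator A x * X x \<partial>density M Z)"
    by (rule nn_integral_density[symmetric]) measurable
  also have "\<dots> = (\<integral>\<^sup>+x. indicator A x * ?Y x \<partial>density M Z)"
    by (rule Q.nn_cond_exp_intg[OF _ XQ, symmetric]) measurable
  also have "\<dots> = (\<integral>\<^sup>+x. (indicator A x * ?Y x) * Z x \<partial>M)"
    by (subst nn_integral_density) (measurable, simp add: mult_ac)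
  also have "\<dots> = (\<integral>\<^sup>+x\<in>A. ?Y x * Z' x \<partial>M)"
    by (subst tower) (measurable, simp add: mult_ac)
  finally show "(\<integral>\<^sup>+x\<in>A. Z x * X x \<partial>M) = (\<integral>\<^sup>+x\<in>A. ?Y x * Z' x \<partial>M)" .
qed measurable

lemma nn_cond_exp_indicator_split:
  assumes [measurable]: "f \<in> borel_measurable M" "A \<in> sets M"
  shows "AE x in M. nn_cond_exp M F f x
    = nn_cond_exp M F (\<lambda>x. f x * indicator (space M - A) x) x + nn_cond_exp M F (\<lambda>x. f x * indicator A x) x"
proof -
  have "AE x in M. nn_cond_exp M F (\<lambda>x. f x * indicator (space M - A) x) x + nn_cond_exp M F (\<lambda>x. f x * indicator A x) x
      = nn_cond_exp M F (\<lambda>x. f x * indicator (space M - A) x + f x * indicator A x) x"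
    by (rule nn_cond_exp_sum) measurable
  moreover have "AE x in M. nn_cond_exp M F (\<lambda>x. f x * indicator (space M - A) x + f x * indicator A x) x
      = nn_cond_exp M F f x"
  proof (rule nn_cond_exp_cong)
    show "AE x in M. f x * indicator (space M - A) x + f x * indicator A x = f x"
      using sets.sets_into_space[OF assms(2)] by (intro AE_I2) (auto split: split_indicator)
  qed measurable
  ultimately show ?thesis by eventually_elim simp
qed

end

locale exchange_market =
  fixes d :: nat and T :: real and F :: "real \<Rightarrow> 'a measure"
    and S :: "real \<Rightarrow> 'a \<Rightarrow> nat \<Rightarrow> nat \<Rightarrow> ennreal"
    and Q1 :: "'a measure" and Q :: "nat \<Rightarrow> 'a measure"
  assumes d: "1 \<le> d"
    and filt: "filtered_space (space Q1) F T"
    and proc: "exchange_process d (space Q1) F T S"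
    and Q1: "prob_space Q1" and sets_Q1: "sets Q1 = sets (F T)"
    and mart: "\<forall>j\<in>{1..d}. (\<forall>t\<in>{0..T}. \<forall>\<omega>\<in>space Q1. S t \<omega> 1 j < \<infinity>) \<and>
                  martingale Q1 F T (\<lambda>t \<omega>. enn2real (S t \<omega> 1 j))"
    and Q_def: "\<forall>i\<in>{1..d}. Q i = density Q1 (\<lambda>\<omega>. initial (space Q1) S i 1 * S T \<omega> 1 i)"
begin

abbreviation "\<Omega> \<equiv> space Q1"

definition "\<omega>0 = (SOME \<omega>. \<omega> \<in> \<Omega>)"

lemma one_in: "1 \<in> {1..d}"
  using d by simp

lemma \<omega>0_in: "\<omega>0 \<in> \<Omega>"
  unfolding \<omega>0_def using prob_space.not_empty[OF Q1] by (simp add: some_in_eq)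

lemma zero_in: "0 \<in> {0..T}" and T_in: "T \<in> {0..T}"
  using filt unfolding filtered_space_def by auto

lemma space_F: "t \<in> {0..T} \<Longrightarrow> space (F t) = \<Omega>"
  using filt unfolding filtered_space_def by auto

lemma sets_F_subset: "t \<in> {0..T} \<Longrightarrow> sets (F t) \<subseteq> sets Q1"
  using filt sets_Q1 unfolding filtered_space_def by auto

lemma sigma_finite_subalgebra_F:
  assumes "t \<in> {0..T}" "prob_space M" "space M = \<Omega>" "sets M = sets Q1"
  shows "sigma_finite_subalgebra M (F t)"
  using assms space_F sets_F_subset by (intro sigma_finite_subalgebra_prob_space) (auto simp: subalgebra_def)

lemma measurable_F_Q1: "t \<in> {0..T} \<Longrightarrow> f \<in> borel_measurable (F t) \<Longrightarrow> f \<in> borel_measurable Q1"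
  using measurable_from_subalg sigma_finite_subalgebra.subalg sigma_finite_subalgebra_F Q1 by blast

lemma measurable_S: "i \<in> {1..d} \<Longrightarrow> j \<in> {1..d} \<Longrightarrow> t \<in> {0..T} \<Longrightarrow> (\<lambda>\<omega>. S t \<omega> i j) \<in> borel_measurable (F t)"
  using proc unfolding exchange_process_def by auto

lemma exchange_matrix_S: "t \<in> {0..T} \<Longrightarrow> \<omega> \<in> \<Omega> \<Longrightarrow> exchange_matrix d (S t \<omega>)"
  using proc unfolding exchange_process_def by auto

lemma S1_finite: "j \<in> {1..d} \<Longrightarrow> t \<in> {0..T} \<Longrightarrow> \<omega> \<in> \<Omega> \<Longrightarrow> S t \<omega> 1 j \<noteq> \<infinity>"
  using mart by fastforce

lemma S0_eq: assumes "\<omega> \<in> \<Omega>" "i \<in> {1..d}" "j \<in> {1..d}" shows "S 0 \<omega> i j = S 0 \<omega>0 i j"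
proof -
  let ?A = "(\<lambda>\<omega>. S 0 \<omega> i j) -` {S 0 \<omega>0 i j} \<inter> \<Omega>"
  have "?A \<in> sets (F 0)"
    using measurable_sets[OF measurable_S[OF assms(2,3) zero_in]] space_F[OF zero_in] by force
  then have "?A \<in> {{}, \<Omega>}" using filt unfolding filtered_space_def by auto
  moreover have "\<omega>0 \<in> ?A" using \<omega>0_in by simp
  ultimately show ?thesis using assms(1) by auto
qed

lemma initial_eq: "initial \<Omega> S = S 0 \<omega>0"
  unfolding initial_def \<omega>0_def ..

lemma S0_active: assumes "i \<in> {1..d}" shows "(\<Sum>k\<in>{1..d}. S 0 \<omega>0 i k) \<noteq> \<infinity>"
proof -
  have "active d S 0 \<omega>0 = {1..d}" using proc \<omega>0_in unfolding exchange_process_def by blast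
  then have "i \<in> active d S 0 \<omega>0" using assms by simp
  then show ?thesis unfolding active_iff by blast
qed

lemma S0_finite: "i \<in> {1..d} \<Longrightarrow> j \<in> {1..d} \<Longrightarrow> S 0 \<omega>0 i j \<noteq> \<infinity>"
  using S0_active by simp

lemma S0_nonzero: "i \<in> {1..d} \<Longrightarrow> j \<in> {1..d} \<Longrightarrow> S 0 \<omega>0 i j \<noteq> 0"
  using exchange_matrix_nonzero[OF exchange_matrix_S[OF zero_in \<omega>0_in]] S0_finite by blast

lemma S0_mult: "i \<in> {1..d} \<Longrightarrow> j \<in> {1..d} \<Longrightarrow> k \<in> {1..d} \<Longrightarrow> S 0 \<omega>0 i j * S 0 \<omega>0 j k = S 0 \<omega>0 i k"
  using exchange_matrix_mult[OF exchange_matrix_S[OF zero_in \<omega>0_in]] S0_finite S0_nonzero by blast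

lemma set_nn_integral_S1_eq:
  assumes j: "j \<in> {1..d}" and t: "t \<in> {0..T}" and A: "A \<in> sets (F t)"
  shows "(\<integral>\<^sup>+\<omega>. S T \<omega> 1 j * indicator A \<omega> \<partial>Q1) = (\<integral>\<^sup>+\<omega>. S t \<omega> 1 j * indicator A \<omega> \<partial>Q1)"
proof -
  interpret sigma_finite_subalgebra Q1 "F t" using sigma_finite_subalgebra_F[OF t Q1] by simp
  define x where "x = (\<lambda>u \<omega>. enn2real (S u \<omega> 1 j))"
  have M: "martingale Q1 F T x" using mart j unfolding x_def by auto
  have int_x: "integrable Q1 (x u)" if "u \<in> {0..T}" for u
    using M that unfolding martingale_def by auto
  have AQ: "A \<in> sets Q1" using A sets_F_subset[OF t] by auto
  have as_integral: "(\<integral>\<^sup>+\<omega>. S u \<omega> 1 j * indicator A \<omega> \<partial>Q1) = ennreal (\<integral>\<omega>. indicator A \<omega> *\<^sub>R x u \<omega> \<partial>Q1)"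
    if u: "u \<in> {0..T}" for u
  proof -
    have "(\<integral>\<^sup>+\<omega>. S u \<omega> 1 j * indicator A \<omega> \<partial>Q1) = (\<integral>\<^sup>+\<omega>. ennreal (indicator A \<omega> *\<^sub>R x u \<omega>) \<partial>Q1)"
      using S1_finite[OF j u] unfolding x_def
      by (intro nn_integral_cong) (simp add: ennreal_enn2real_if split: split_indicator)
    also have "\<dots> = ennreal (\<integral>\<omega>. indicator A \<omega> *\<^sub>R x u \<omega> \<partial>Q1)"
      by (rule nn_integral_eq_integral[OF integrable_mult_indicator[OF AQ int_x[OF u]]])
        (auto simp: x_def split: split_indicator)
    finally show ?thesis .
  qed
  have "AE \<omega> in Q1. real_cond_exp Q1 (F t) (x T) \<omega> = x t \<omega>"
    using M t T_in unfolding martingale_def by auto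
  moreover have "x t \<in> borel_measurable Q1"
    using M t measurable_F_Q1 unfolding martingale_def by blast
  ultimately have "(\<integral>\<omega>. indicator A \<omega> *\<^sub>R real_cond_exp Q1 (F t) (x T) \<omega> \<partial>Q1) = (\<integral>\<omega>. indicator A \<omega> *\<^sub>R x t \<omega> \<partial>Q1)"
    using AQ by (intro integral_cong_AE) auto
  then have "(\<integral>\<omega>. indicator A \<omega> *\<^sub>R x T \<omega> \<partial>Q1) = (\<integral>\<omega>. indicator A \<omega> *\<^sub>R x t \<omega> \<partial>Q1)"
    using real_cond_exp_intA[OF int_x[OF T_in] A] unfolding set_lebesgue_integral_def by simp
  then show ?thesis using as_integral[OF T_in] as_integral[OF t] by simp
qed

lemma nn_integral_S1_tower:
  assumes j: "j \<in> {1..d}" and t: "t \<in> {0..T}" and Y: "Y \<in> borel_measurable (F t)"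
  shows "(\<integral>\<^sup>+\<omega>. Y \<omega> * S T \<omega> 1 j \<partial>Q1) = (\<integral>\<^sup>+\<omega>. Y \<omega> * S t \<omega> 1 j \<partial>Q1)"
proof -
  interpret sigma_finite_subalgebra Q1 "F t" using sigma_finite_subalgebra_F[OF t Q1] by simp
  have "AE \<omega> in Q1. S t \<omega> 1 j = nn_cond_exp Q1 (F t) (\<lambda>\<omega>. S T \<omega> 1 j) \<omega>"
    using set_nn_integral_S1_eq[OF j t] measurable_S[OF one_in j T_in] measurable_S[OF one_in j t]
      measurable_F_Q1[OF T_in] by (intro nn_cond_exp_charact) auto
  then have "(\<integral>\<^sup>+\<omega>. Y \<omega> * S t \<omega> 1 j \<partial>Q1) = (\<integral>\<^sup>+\<omega>. Y \<omega> * nn_cond_exp Q1 (F t) (\<lambda>\<omega>. S T \<omega> 1 j) \<omega> \<partial>Q1)"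
    by (intro nn_integral_cong_AE) auto
  also have "\<dots> = (\<integral>\<^sup>+\<omega>. Y \<omega> * S T \<omega> 1 j \<partial>Q1)"
    using measurable_F_Q1[OF T_in measurable_S[OF one_in j T_in]] by (intro nn_cond_exp_intg Y)
  finally show ?thesis ..
qed

definition "D i \<omega> = S 0 \<omega>0 i 1 * S T \<omega> 1 i"

lemma Q_eq: "i \<in> {1..d} \<Longrightarrow> Q i = density Q1 (D i)"
  using Q_def unfolding D_def initial_eq by auto

lemma measurable_D [measurable]: "i \<in> {1..d} \<Longrightarrow> D i \<in> borel_measurable Q1"
  unfolding D_def using measurable_F_Q1[OF T_in measurable_S[OF one_in _ T_in]] by measurable

lemma nn_integral_Q:
  assumes i: "i \<in> {1..d}" and t: "t \<in> {0..T}" and Y: "Y \<in> borel_measurable (F t)"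
  shows "(\<integral>\<^sup>+\<omega>. Y \<omega> \<partial>Q i) = S 0 \<omega>0 i 1 * (\<integral>\<^sup>+\<omega>. Y \<omega> * S t \<omega> 1 i \<partial>Q1)"
proof -
  have YQ: "Y \<in> borel_measurable Q1" "(\<lambda>\<omega>. S t \<omega> 1 i) \<in> borel_measurable Q1"
    using measurable_F_Q1[OF t] Y measurable_S[OF one_in i t] by auto
  have "(\<integral>\<^sup>+\<omega>. Y \<omega> \<partial>Q i) = (\<integral>\<^sup>+\<omega>. (S 0 \<omega>0 i 1 * Y \<omega>) * S T \<omega> 1 i \<partial>Q1)"
    unfolding Q_eq[OF i] using i YQ by (subst nn_integral_density) (auto simp: D_def mult_ac)
  also have "\<dots> = (\<integral>\<^sup>+\<omega>. (S 0 \<omega>0 i 1 * Y \<omega>) * S t \<omega> 1 i \<partial>Q1)"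
    by (rule nn_integral_S1_tower[OF i t]) (use Y in measurable)
  also have "\<dots> = S 0 \<omega>0 i 1 * (\<integral>\<^sup>+\<omega>. Y \<omega> * S t \<omega> 1 i \<partial>Q1)"
    using YQ by (subst nn_integral_cmult[symmetric]) (auto simp: mult_ac)
  finally show ?thesis .
qed

lemma prob_space_Q: assumes i: "i \<in> {1..d}" shows "prob_space (Q i)"
proof
  have "emeasure (Q i) (space (Q i)) = S 0 \<omega>0 i 1 * (\<integral>\<^sup>+\<omega>. S 0 \<omega> 1 i \<partial>Q1)"
    using nn_integral_Q[OF i zero_in, of "\<lambda>_. 1"] by simp
  also have "\<dots> = S 0 \<omega>0 i 1 * (\<integral>\<^sup>+\<omega>. S 0 \<omega>0 1 i \<partial>Q1)"
    using S0_eq[OF _ one_in i] by (intro arg_cong[where f="(*) _"] nn_integral_cong) simp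
  also have "\<dots> = 1"
    using S0_mult[OF i one_in i] exchange_matrix_diag[OF exchange_matrix_S[OF zero_in \<omega>0_in] i]
      prob_space.emeasure_space_1[OF Q1] by simp
  finally show "emeasure (Q i) (space (Q i)) = 1" .
qed

lemma numeraire_consistent_Q: "numeraire_consistent d \<Omega> F T S Q"
  unfolding numeraire_consistent_def initial_eq
proof (intro ballI)
  fix i j t A assume i: "i \<in> {1..d}" and j: "j \<in> {1..d}" and t: "t \<in> {0..T}" and A: "A \<in> sets (F t)"
  define B where "B = {\<omega>\<in>\<Omega>. 0 < S t \<omega> j i}"
  have [measurable]: "A \<in> sets (F t)" "(\<lambda>\<omega>. S t \<omega> j i) \<in> borel_measurable (F t)"
    "(\<lambda>\<omega>. S t \<omega> i j) \<in> borel_measurable (F t)"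
    using A measurable_S[OF j i t] measurable_S[OF i j t] by auto
  have "{\<omega>\<in>space (F t). 0 < S t \<omega> j i} \<in> sets (F t)" by measurable
  then have [measurable]: "B \<in> sets (F t)" unfolding B_def using space_F[OF t] by simp
  have B_sets: "A \<inter> B \<in> sets (Q j)" using Q_eq[OF j] sets_F_subset[OF t] by auto
  have "(\<integral>\<^sup>+\<omega>. S t \<omega> i j * indicator A \<omega> \<partial>Q i)
      = S 0 \<omega>0 i 1 * (\<integral>\<^sup>+\<omega>. S t \<omega> i j * indicator A \<omega> * S t \<omega> 1 i \<partial>Q1)"
    by (rule nn_integral_Q[OF i t]) measurable
  also have "\<dots> = S 0 \<omega>0 i 1 * (\<integral>\<^sup>+\<omega>. indicator (A \<inter> B) \<omega> * S t \<omega> 1 j \<partial>Q1)"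
    using exchange_matrix_mult_indicator[OF exchange_matrix_S[OF t] i j one_in S1_finite[OF i t] S1_finite[OF j t]]
    by (intro arg_cong[where f="(*) _"] nn_integral_cong) (auto simp: B_def mult_ac split: split_indicator)
  also have "\<dots> = S 0 \<omega>0 i j * (S 0 \<omega>0 j 1 * (\<integral>\<^sup>+\<omega>. indicator (A \<inter> B) \<omega> * S t \<omega> 1 j \<partial>Q1))"
    using S0_mult[OF i j one_in] by (simp add: mult.assoc[symmetric])
  also have "\<dots> = S 0 \<omega>0 i j * emeasure (Q j) (A \<inter> B)"
    using nn_integral_Q[OF j t, of "indicator (A \<inter> B)"] B_sets by simp
  finally show "(\<integral>\<^sup>+\<omega>. S t \<omega> i j * indicator A \<omega> \<partial>Q i) = S 0 \<omega>0 i j * emeasure (Q j) (A \<inter> B)" .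
qed

lemma absolutely_continuous_Q: "i \<in> {1..d} \<Longrightarrow> absolutely_continuous Q1 (Q i)"
  using Q_eq absolutely_continuousI_density measurable_D by metis

lemma weighted_sum_measure_Q:
  "weighted_sum_measure \<Omega> (sets (F T)) {1..d} w Q = density Q1 (\<lambda>\<omega>. \<Sum>i\<in>{1..d}. w i * D i \<omega>)"
  (is "_ = density Q1 ?g")
proof -
  have "density Q1 ?g = measure_of \<Omega> (sets (F T)) (emeasure (density Q1 ?g))"
    using measure_of_of_measure[of "density Q1 ?g"] sets_Q1 by simp
  also have "\<dots> = measure_of \<Omega> (sets (F T)) (\<lambda>A. \<Sum>i\<in>{1..d}. w i * emeasure (Q i) A)"
  proof (rule measure_of_eq)
    show "sets (F T) \<subseteq> Pow \<Omega>" using sets.space_closed[of Q1] sets_Q1 by simp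
    fix A assume "A \<in> sigma_sets \<Omega> (sets (F T))"
    then have [measurable]: "A \<in> sets Q1" using sets.sigma_sets_eq[of Q1] sets_Q1 by simp
    have "emeasure (density Q1 ?g) A = (\<integral>\<^sup>+\<omega>. (\<Sum>i\<in>{1..d}. w i * (D i \<omega> * indicator A \<omega>)) \<partial>Q1)"
      by (subst emeasure_density) (measurable, auto simp: sum_distrib_right mult.assoc intro!: nn_integral_cong)
    also have "\<dots> = (\<Sum>i\<in>{1..d}. w i * (\<integral>\<^sup>+\<omega>. D i \<omega> * indicator A \<omega> \<partial>Q1))"
      by (subst nn_integral_sum) (measurable, auto intro!: sum.cong nn_integral_cmult)
    also have "\<dots> = (\<Sum>i\<in>{1..d}. w i * emeasure (Q i) A)"
      by (intro sum.cong refl) (simp add: Q_eq emeasure_density)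
    finally show "emeasure (density Q1 ?g) A = (\<Sum>i\<in>{1..d}. w i * emeasure (Q i) A)" .
  qed
  finally show ?thesis unfolding weighted_sum_measure_def by simp
qed

lemma S_1_1: "t \<in> {0..T} \<Longrightarrow> \<omega> \<in> \<Omega> \<Longrightarrow> S t \<omega> 1 1 = 1"
  using exchange_matrix_diag[OF exchange_matrix_S one_in] .

lemma equivalent_sum_Q: "equivalent_measures (weighted_sum_measure \<Omega> (sets (F T)) {1..d} (\<lambda>_. 1) Q) Q1"
proof -
  define g where "g = (\<lambda>\<omega>. \<Sum>i\<in>{1..d}. D i \<omega>)"
  have [measurable]: "g \<in> borel_measurable Q1" unfolding g_def by measurable
  have g_ge_1: "1 \<le> g \<omega>" if "\<omega> \<in> \<Omega>" for \<omega>
  proof -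
    have "D 1 \<omega> = 1" unfolding D_def using S_1_1[OF zero_in \<omega>0_in] S_1_1[OF T_in that] by simp
    moreover have "D 1 \<omega> \<le> g \<omega>" unfolding g_def using one_in by (intro member_le_sum) auto
    ultimately show ?thesis by simp
  qed
  have "absolutely_continuous (density Q1 g) Q1"
    unfolding absolutely_continuous_def
  proof
    fix N assume "N \<in> null_sets (density Q1 g)"
    then have N: "N \<in> sets Q1" and ae: "AE \<omega> in Q1. \<omega> \<in> N \<longrightarrow> g \<omega> = 0"
      using null_sets_density_iff[of g Q1] by auto
    from ae have "AE \<omega> in Q1. \<omega> \<notin> N"
      by eventually_elim (use g_ge_1 sets.sets_into_space[OF N] in fastforce)
    then show "N \<in> null_sets Q1" using AE_iff_null_sets[OF N] by simp
  qed
  moreover have "weighted_sum_measure \<Omega> (sets (F T)) {1..d} (\<lambda>_. 1) Q = density Q1 g"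
    unfolding weighted_sum_measure_Q g_def by simp
  ultimately show ?thesis
    unfolding equivalent_measures_def by (simp add: absolutely_continuousI_density)
qed

definition "\<sigma> t \<omega> = (\<Sum>k\<in>{1..d}. S t \<omega> 1 k)"

lemma basket_1: "basket d S t \<omega> 1 = 1 / \<sigma> t \<omega>"
  unfolding basket_def \<sigma>_def ..

lemma measurable_\<sigma>: "t \<in> {0..T} \<Longrightarrow> \<sigma> t \<in> borel_measurable (F t)"
  unfolding \<sigma>_def using measurable_S[OF one_in] by measurable

lemma \<sigma>_nonzero_finite:
  assumes "t \<in> {0..T}" "\<omega> \<in> \<Omega>" shows "\<sigma> t \<omega> \<noteq> 0" "\<sigma> t \<omega> \<noteq> \<infinity>"
proof -
  show fin: "\<sigma> t \<omega> \<noteq> \<infinity>" unfolding \<sigma>_def using S1_finite[OF _ assms] by simp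
  have "1 / \<sigma> t \<omega> \<noteq> \<infinity>"
    using inverse_row_sum_nonzero_finite(2)[OF exchange_matrix_S[OF assms] one_in fin[unfolded \<sigma>_def]]
    unfolding \<sigma>_def .
  then show "\<sigma> t \<omega> \<noteq> 0" by (intro notI) simp
qed

lemma basket_1_mult_\<sigma>: "t \<in> {0..T} \<Longrightarrow> \<omega> \<in> \<Omega> \<Longrightarrow> basket d S t \<omega> 1 * \<sigma> t \<omega> = 1"
  using \<sigma>_nonzero_finite unfolding basket_1 by (simp add: ennreal_divide_times top.not_eq_extremum)

lemma nn_integral_\<sigma>_tower:
  assumes t: "t \<in> {0..T}" and Y: "Y \<in> borel_measurable (F t)"
  shows "(\<integral>\<^sup>+\<omega>. Y \<omega> * \<sigma> T \<omega> \<partial>Q1) = (\<integral>\<^sup>+\<omega>. Y \<omega> * \<sigma> t \<omega> \<partial>Q1)"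
proof -
  have "(\<integral>\<^sup>+\<omega>. Y \<omega> * \<sigma> u \<omega> \<partial>Q1) = (\<Sum>k\<in>{1..d}. \<integral>\<^sup>+\<omega>. Y \<omega> * S u \<omega> 1 k \<partial>Q1)"
    if "u \<in> {0..T}" for u
    unfolding \<sigma>_def sum_distrib_left
    using measurable_F_Q1[OF t Y] measurable_F_Q1[OF that measurable_S[OF one_in _ that]]
    by (intro nn_integral_sum) measurable
  then show ?thesis using nn_integral_S1_tower[OF _ t Y] T_in t by simp
qed

text \<open>\<open>Qbar\<close> is the valuation measure with respect to the basket, see
  \<open>weighted_sum_measure_basket\<close>.\<close>

definition "b0 = basket d S 0 \<omega>0 1"

abbreviation "Qbar \<equiv> density Q1 (\<lambda>\<omega>. b0 * \<sigma> T \<omega>)"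

lemma b0_nonzero_finite: "b0 \<noteq> 0" "b0 \<noteq> \<infinity>"
  using inverse_row_sum_nonzero_finite[OF exchange_matrix_S[OF zero_in \<omega>0_in] one_in S0_active[OF one_in]]
  unfolding b0_def basket_def by auto

lemma weighted_sum_measure_basket: "weighted_sum_measure \<Omega> (sets (F T)) {1..d} (basket d S 0 \<omega>0) Q = Qbar"
proof -
  have weights: "basket d S 0 \<omega>0 i * D i \<omega> = b0 * S T \<omega> 1 i" if i: "i \<in> {1..d}" for i \<omega>
    using exchange_matrix_inverse_row_sum[OF exchange_matrix_S[OF zero_in \<omega>0_in] i one_in S0_active[OF i] S0_finite[OF one_in i]]
    unfolding b0_def basket_def D_def by (simp add: mult_ac)
  show ?thesis
    unfolding weighted_sum_measure_Q \<sigma>_def sum_distrib_left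
    by (intro arg_cong[where f="density Q1"] ext sum.cong refl) (rule weights)
qed

lemma prob_space_Qbar: "prob_space Qbar"
proof
  have [measurable]: "\<sigma> T \<in> borel_measurable Q1" by (rule measurable_F_Q1[OF T_in measurable_\<sigma>[OF T_in]])
  have "emeasure Qbar (space Qbar) = (\<integral>\<^sup>+\<omega>. b0 * \<sigma> T \<omega> \<partial>Q1)"
    by (simp add: emeasure_density cong: nn_integral_cong)
  also have "\<dots> = (\<integral>\<^sup>+\<omega>. b0 * \<sigma> 0 \<omega> \<partial>Q1)"
    by (rule nn_integral_\<sigma>_tower[OF zero_in]) simp
  also have "\<dots> = (\<integral>\<^sup>+\<omega>. b0 * \<sigma> 0 \<omega>0 \<partial>Q1)"
    using S0_eq[OF _ one_in] by (intro nn_integral_cong) (simp add: \<sigma>_def)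
  also have "\<dots> = 1"
    using basket_1_mult_\<sigma>[OF zero_in \<omega>0_in] prob_space.emeasure_space_1[OF Q1] unfolding b0_def by simp
  finally show "emeasure Qbar (space Qbar) = 1" .
qed

lemma measurable_claim:
  "C \<in> claims d \<Omega> F T S \<Longrightarrow> i \<in> {1..d} \<Longrightarrow> (\<lambda>\<omega>. C \<omega> i) \<in> borel_measurable Q1"
  unfolding claims_def using measurable_cong_sets[OF sets_Q1 refl] by blast

lemma basket_claim_eq:
  assumes "C \<in> claims d \<Omega> F T S" "\<omega> \<in> \<Omega>"
  shows "basket_claim d T S C \<omega> = basket d S T \<omega> 1 * C \<omega> 1"
  using assms exchange_matrix_S[OF T_in] S1_finite[OF _ T_in]
  by (intro basket_claim_eq_basket one_in) (auto simp: claims_def)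

lemma measurable_basket_claim:
  assumes C: "C \<in> claims d \<Omega> F T S" shows "basket_claim d T S C \<in> borel_measurable Q1"
proof -
  have "(\<lambda>\<omega>. basket d S T \<omega> 1 * C \<omega> 1) \<in> borel_measurable Q1"
    using measurable_F_Q1[OF T_in measurable_\<sigma>[OF T_in]] measurable_claim[OF C one_in]
    unfolding basket_1 by measurable
  then show ?thesis by (rule measurable_cong[THEN iffD2, rotated]) (simp add: basket_claim_eq[OF C])
qed

lemma Qbar_density_mult_basket_claim:
  assumes C: "C \<in> claims d \<Omega> F T S" and \<omega>: "\<omega> \<in> \<Omega>"
  shows "b0 * \<sigma> T \<omega> * basket_claim d T S C \<omega> = b0 * C \<omega> 1"
proof -
  have "b0 * \<sigma> T \<omega> * basket_claim d T S C \<omega> = b0 * C \<omega> 1 * (basket d S T \<omega> 1 * \<sigma> T \<omega>)"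
    using basket_claim_eq[OF C \<omega>] by (simp add: mult_ac)
  then show ?thesis using basket_1_mult_\<sigma>[OF T_in \<omega>] by simp
qed

lemma D_mult_claim:
  assumes C: "C \<in> claims d \<Omega> F T S" and i: "i \<in> {1..d}" and \<omega>: "\<omega> \<in> \<Omega>"
  shows "D i \<omega> * C \<omega> i = S 0 \<omega>0 i 1 * (C \<omega> 1 * indicator (\<Omega> - {\<omega>\<in>\<Omega>. S T \<omega> 1 i = 0}) \<omega>)"
proof -
  have "value_vector d (S T \<omega>) (C \<omega>)" using C \<omega> unfolding claims_def by blast
  then have "C \<omega> i * S T \<omega> 1 i = (if S T \<omega> 1 i = 0 then 0 else C \<omega> 1)"
    by (rule value_vector_mult[of d "S T \<omega>" "C \<omega>" i 1, OF _ i one_in S1_finite[OF i T_in \<omega>]])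
  then have "S 0 \<omega>0 i 1 * (C \<omega> i * S T \<omega> 1 i)
      = S 0 \<omega>0 i 1 * (C \<omega> 1 * indicator (\<Omega> - {\<omega>\<in>\<Omega>. S T \<omega> 1 i = 0}) \<omega>)"
    using \<omega> by (simp split: split_indicator)
  then show ?thesis unfolding D_def by (simp add: mult_ac)
qed

lemma active_S_mult_swap:
  assumes r: "r \<in> {0..T}" and \<omega>: "\<omega> \<in> \<Omega>" and act: "i \<in> active d S r \<omega>"
  shows "S r \<omega> i 1 * S r \<omega> 1 i = 1"
proof -
  from act have i: "i \<in> {1..d}" and row: "(\<Sum>k\<in>{1..d}. S r \<omega> i k) \<noteq> \<infinity>"
    unfolding active_iff by auto
  note m = exchange_matrix_S[OF r \<omega>]
  have "S r \<omega> i 1 \<noteq> \<infinity>" using row one_in by simp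
  moreover from this have "S r \<omega> i 1 \<noteq> 0"
    using exchange_matrix_nonzero[OF m i one_in] S1_finite[OF i r \<omega>] by blast
  ultimately show ?thesis using exchange_matrix_mult_swap[OF m i one_in] by blast
qed

lemma nn_cond_exp_Qbar:
  assumes r: "r \<in> {0..T}" and C: "C \<in> claims d \<Omega> F T S"
  shows "AE \<omega> in Q1. nn_cond_exp Qbar (F r) (basket_claim d T S C) \<omega>
                      = basket d S r \<omega> 1 * nn_cond_exp Q1 (F r) (\<lambda>\<omega>. C \<omega> 1) \<omega>"
proof -
  interpret sigma_finite_subalgebra Q1 "F r" using sigma_finite_subalgebra_F[OF r Q1] by simp
  let ?X = "basket_claim d T S C"
  have [measurable]: "\<sigma> T \<in> borel_measurable Q1" "\<sigma> r \<in> borel_measurable (F r)"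
    "?X \<in> borel_measurable Q1" "(\<lambda>\<omega>. C \<omega> 1) \<in> borel_measurable Q1"
    using measurable_F_Q1[OF T_in measurable_\<sigma>[OF T_in]] measurable_\<sigma>[OF r]
      measurable_basket_claim[OF C] measurable_claim[OF C one_in] by auto
  have "AE \<omega> in Q1. nn_cond_exp Qbar (F r) ?X \<omega> * (b0 * \<sigma> r \<omega>) = nn_cond_exp Q1 (F r) (\<lambda>\<omega>. b0 * \<sigma> T \<omega> * ?X \<omega>) \<omega>"
  proof (rule nn_cond_exp_density_mult)
    show "sigma_finite_subalgebra Qbar (F r)" using sigma_finite_subalgebra_F[OF r prob_space_Qbar] by simp
    fix Y :: "'a \<Rightarrow> ennreal" assume [measurable]: "Y \<in> borel_measurable (F r)"
    show "(\<integral>\<^sup>+\<omega>. Y \<omega> * (b0 * \<sigma> T \<omega>) \<partial>Q1) = (\<integral>\<^sup>+\<omega>. Y \<omega> * (b0 * \<sigma> r \<omega>) \<partial>Q1)"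
      using nn_integral_\<sigma>_tower[OF r, of "\<lambda>\<omega>. Y \<omega> * b0"] by (simp add: mult_ac)
  qed measurable
  moreover have "AE \<omega> in Q1. nn_cond_exp Q1 (F r) (\<lambda>\<omega>. b0 * \<sigma> T \<omega> * ?X \<omega>) \<omega> = nn_cond_exp Q1 (F r) (\<lambda>\<omega>. b0 * C \<omega> 1) \<omega>"
    using Qbar_density_mult_basket_claim[OF C] by (intro nn_cond_exp_cong AE_I2) measurable
  moreover have "AE \<omega> in Q1. b0 * nn_cond_exp Q1 (F r) (\<lambda>\<omega>. C \<omega> 1) \<omega> = nn_cond_exp Q1 (F r) (\<lambda>\<omega>. b0 * C \<omega> 1) \<omega>"
    by (rule nn_cond_exp_prod) measurable
  ultimately show ?thesis using AE_space
  proof eventually_elim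
    case (elim \<omega>)
    then have "nn_cond_exp Qbar (F r) ?X \<omega> * (b0 * \<sigma> r \<omega>) = b0 * nn_cond_exp Q1 (F r) (\<lambda>\<omega>. C \<omega> 1) \<omega>"
      by simp
    then show ?case using b0_nonzero_finite basket_1_mult_\<sigma>[OF r elim(4)] by (rule ennreal_mult_cancel_inverse)
  qed
qed

lemma nn_cond_exp_Q:
  assumes r: "r \<in> {0..T}" and C: "C \<in> claims d \<Omega> F T S" and i: "i \<in> {1..d}"
  shows "AE \<omega> in Q1. i \<in> active d S r \<omega> \<longrightarrow> nn_cond_exp (Q i) (F r) (\<lambda>\<omega>. C \<omega> i) \<omega>
      = S r \<omega> i 1 * nn_cond_exp Q1 (F r) (\<lambda>\<omega>. C \<omega> 1 * indicator (\<Omega> - {\<omega>\<in>\<Omega>. S T \<omega> 1 i = 0}) \<omega>) \<omega>"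
proof -
  interpret sigma_finite_subalgebra Q1 "F r" using sigma_finite_subalgebra_F[OF r Q1] by simp
  define h where "h \<omega> = C \<omega> 1 * indicator (\<Omega> - {\<omega>\<in>\<Omega>. S T \<omega> 1 i = 0}) \<omega>" for \<omega>
  let ?s = "S 0 \<omega>0 i 1"
  have [measurable]: "(\<lambda>\<omega>. S T \<omega> 1 i) \<in> borel_measurable Q1" "(\<lambda>\<omega>. S r \<omega> 1 i) \<in> borel_measurable (F r)"
    "(\<lambda>\<omega>. C \<omega> i) \<in> borel_measurable Q1" "(\<lambda>\<omega>. C \<omega> 1) \<in> borel_measurable Q1"
    using measurable_F_Q1[OF T_in measurable_S[OF one_in i T_in]] measurable_S[OF one_in i r]
      measurable_claim[OF C] i one_in by auto
  have [measurable]: "h \<in> borel_measurable Q1" unfolding h_def by measurable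
  have "AE \<omega> in Q1. nn_cond_exp (Q i) (F r) (\<lambda>\<omega>. C \<omega> i) \<omega> * (?s * S r \<omega> 1 i) = nn_cond_exp Q1 (F r) (\<lambda>\<omega>. D i \<omega> * C \<omega> i) \<omega>"
    unfolding Q_eq[OF i]
  proof (rule nn_cond_exp_density_mult)
    show "sigma_finite_subalgebra (density Q1 (D i)) (F r)"
      using sigma_finite_subalgebra_F[OF r prob_space_Q[OF i]] Q_eq[OF i] by simp
    fix Y :: "'a \<Rightarrow> ennreal" assume [measurable]: "Y \<in> borel_measurable (F r)"
    show "(\<integral>\<^sup>+\<omega>. Y \<omega> * D i \<omega> \<partial>Q1) = (\<integral>\<^sup>+\<omega>. Y \<omega> * (?s * S r \<omega> 1 i) \<partial>Q1)"
      using nn_integral_S1_tower[OF i r, of "\<lambda>\<omega>. Y \<omega> * ?s"] by (simp add: D_def mult_ac)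
  qed (use i in measurable)
  moreover have "AE \<omega> in Q1. nn_cond_exp Q1 (F r) (\<lambda>\<omega>. D i \<omega> * C \<omega> i) \<omega> = nn_cond_exp Q1 (F r) (\<lambda>\<omega>. ?s * h \<omega>) \<omega>"
    using D_mult_claim[OF C i] unfolding h_def by (intro nn_cond_exp_cong AE_I2) (use i in measurable)
  moreover have "AE \<omega> in Q1. ?s * nn_cond_exp Q1 (F r) h \<omega> = nn_cond_exp Q1 (F r) (\<lambda>\<omega>. ?s * h \<omega>) \<omega>"
    by (rule nn_cond_exp_prod) measurable
  ultimately show ?thesis unfolding h_def[symmetric] using AE_space
  proof eventually_elim
    case (elim \<omega>)
    show ?case
    proof
      assume act: "i \<in> active d S r \<omega>"
      have "nn_cond_exp (Q i) (F r) (\<lambda>\<omega>. C \<omega> i) \<omega> * (?s * S r \<omega> 1 i) = ?s * nn_cond_exp Q1 (F r) h \<omega>"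
        using elim by simp
      then show "nn_cond_exp (Q i) (F r) (\<lambda>\<omega>. C \<omega> i) \<omega> = S r \<omega> i 1 * nn_cond_exp Q1 (F r) h \<omega>"
        using S0_nonzero[OF i one_in] S0_finite[OF i one_in] active_S_mult_swap[OF r elim(4) act]
        by (rule ennreal_mult_cancel_inverse)
    qed
  qed
qed

lemma basket_1_divide_basket:
  assumes r: "r \<in> {0..T}" and \<omega>: "\<omega> \<in> \<Omega>" and act: "i \<in> active d S r \<omega>"
  shows "basket d S r \<omega> 1 * x / basket d S r \<omega> i = S r \<omega> i 1 * x"
proof -
  from act have i: "i \<in> {1..d}" and row: "(\<Sum>k\<in>{1..d}. S r \<omega> i k) \<noteq> \<infinity>"
    unfolding active_iff by auto
  note m = exchange_matrix_S[OF r \<omega>]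
  have "basket d S r \<omega> 1 * x = (S r \<omega> i 1 * x) * basket d S r \<omega> i"
    using exchange_matrix_inverse_row_sum[OF m i one_in row S1_finite[OF i r \<omega>]]
    unfolding basket_def by (simp add: mult_ac)
  moreover have "basket d S r \<omega> i \<noteq> 0" "basket d S r \<omega> i \<noteq> top"
    using inverse_row_sum_nonzero_finite[OF m i row] unfolding basket_def by simp_all
  ultimately show ?thesis using ennreal_mult_divide_eq by simp
qed

lemma nn_cond_exp_Qbar_divide_basket:
  assumes r: "r \<in> {0..T}" and C: "C \<in> claims d \<Omega> F T S" and i: "i \<in> {1..d}"
  shows "AE \<omega> in Q1. i \<in> active d S r \<omega> \<longrightarrow>
           nn_cond_exp Qbar (F r) (basket_claim d T S C) \<omega> / basket d S r \<omega> i
             = nn_cond_exp (Q i) (F r) (\<lambda>\<omega>. C \<omega> i) \<omega>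
               + S r \<omega> i 1 * nn_cond_exp Q1 (F r) (\<lambda>\<omega>. C \<omega> 1 * indicator {\<omega>\<in>\<Omega>. S T \<omega> 1 i = 0} \<omega>) \<omega>"
proof -
  interpret sigma_finite_subalgebra Q1 "F r" using sigma_finite_subalgebra_F[OF r Q1] by simp
  have [measurable]: "(\<lambda>\<omega>. S T \<omega> 1 i) \<in> borel_measurable Q1" "(\<lambda>\<omega>. C \<omega> 1) \<in> borel_measurable Q1"
    using measurable_F_Q1[OF T_in measurable_S[OF one_in i T_in]] measurable_claim[OF C one_in] by auto
  have "{\<omega>\<in>space Q1. S T \<omega> 1 i = 0} \<in> sets Q1" by measurable
  then have "AE \<omega> in Q1. nn_cond_exp Q1 (F r) (\<lambda>\<omega>. C \<omega> 1) \<omega>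
      = nn_cond_exp Q1 (F r) (\<lambda>\<omega>. C \<omega> 1 * indicator (\<Omega> - {\<omega>\<in>\<Omega>. S T \<omega> 1 i = 0}) \<omega>) \<omega>
        + nn_cond_exp Q1 (F r) (\<lambda>\<omega>. C \<omega> 1 * indicator {\<omega>\<in>\<Omega>. S T \<omega> 1 i = 0} \<omega>) \<omega>"
    by (rule nn_cond_exp_indicator_split[rotated]) measurable
  from nn_cond_exp_Qbar[OF r C] nn_cond_exp_Q[OF r C i] this AE_space show ?thesis
  proof eventually_elim
    case (elim \<omega>)
    show ?case
    proof
      assume act: "i \<in> active d S r \<omega>"
      have "nn_cond_exp Qbar (F r) (basket_claim d T S C) \<omega> / basket d S r \<omega> i
          = S r \<omega> i 1 * nn_cond_exp Q1 (F r) (\<lambda>\<omega>. C \<omega> 1) \<omega>"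
        using elim(1) basket_1_divide_basket[OF r elim(4) act] by simp
      then show "nn_cond_exp Qbar (F r) (basket_claim d T S C) \<omega> / basket d S r \<omega> i
          = nn_cond_exp (Q i) (F r) (\<lambda>\<omega>. C \<omega> i) \<omega>
            + S r \<omega> i 1 * nn_cond_exp Q1 (F r) (\<lambda>\<omega>. C \<omega> 1 * indicator {\<omega>\<in>\<Omega>. S T \<omega> 1 i = 0} \<omega>) \<omega>"
        using elim(2,3) act by (simp add: distrib_left)
    qed
  qed
qed

end

theorem mainTheorem8:
  fixes d :: nat and T :: real
    and F :: "real \<Rightarrow> 'a measure"
    and S :: "real \<Rightarrow> 'a \<Rightarrow> nat \<Rightarrow> nat \<Rightarrow> ennreal"
    and Q1 :: "'a measure"
    and Q :: "nat \<Rightarrow> 'a measure"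
    and Qbar :: "'a measure"
  assumes d: "1 \<le> d"
    and filt: "filtered_space (space Q1) F T"
    and proc: "exchange_process d (space Q1) F T S"
    and Q1: "prob_space Q1" "sets Q1 = sets (F T)"
    and mart: "\<forall>j\<in>{1..d}. (\<forall>t\<in>{0..T}. \<forall>\<omega>\<in>space Q1. S t \<omega> 1 j < \<infinity>) \<and>
                  martingale Q1 F T (\<lambda>t \<omega>. enn2real (S t \<omega> 1 j))"
    and Q_def: "\<forall>i\<in>{1..d}. Q i = density Q1 (\<lambda>\<omega>. initial (space Q1) S i 1 * S T \<omega> 1 i)"
    and Qbar_def: "Qbar = weighted_sum_measure (space Q1) (sets (F T)) {1..d}
                      (\<lambda>i. basket d S 0 (SOME \<omega>. \<omega> \<in> space Q1) i) Q"
  shows "(\<forall>i\<in>{1..d}. prob_space (Q i))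
    \<and> numeraire_consistent d (space Q1) F T S Q
    \<and> (\<forall>i\<in>{1..d}. absolutely_continuous Q1 (Q i))
    \<and> equivalent_measures (weighted_sum_measure (space Q1) (sets (F T)) {1..d} (\<lambda>_. 1) Q) Q1
    \<and> (\<forall>r\<in>{0..T}. \<forall>C\<in>claims d (space Q1) F T S.
         (\<integral>\<^sup>+\<omega>. basket_claim d T S C \<omega> \<partial>Qbar) < \<infinity> \<longrightarrow>
         (AE \<omega> in Q1. nn_cond_exp Qbar (F r) (basket_claim d T S C) \<omega>
                        = basket d S r \<omega> 1 * nn_cond_exp Q1 (F r) (\<lambda>\<omega>. C \<omega> 1) \<omega>)
       \<and> (\<forall>i\<in>{1..d}. AE \<omega> in Q1. i \<in> active d S r \<omega> \<longrightarrow>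
             nn_cond_exp Qbar (F r) (basket_claim d T S C) \<omega> / basket d S r \<omega> i
               = nn_cond_exp (Q i) (F r) (\<lambda>\<omega>. C \<omega> i) \<omega>
                 + S r \<omega> i 1 * nn_cond_exp Q1 (F r)
                     (\<lambda>\<omega>. C \<omega> 1 * indicator {\<omega>\<in>space Q1. S T \<omega> 1 i = 0} \<omega>) \<omega>))"
proof -
  interpret exchange_market d T F S Q1 Q
    by (rule exchange_market.intro) (fact d filt proc Q1 mart Q_def)+
  have "Qbar = density Q1 (\<lambda>\<omega>. b0 * \<sigma> T \<omega>)"
    unfolding Qbar_def \<omega>0_def[symmetric] by (rule weighted_sum_measure_basket)
  then show ?thesis
    using prob_space_Q numeraire_consistent_Q absolutely_continuous_Q equivalent_sum_Q
      nn_cond_exp_Qbar nn_cond_exp_Qbar_divide_basket by simp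
qed

end
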